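(* Let $G$ be a Lie group with identity element $e$, and for an integer $c$ let $\mu_c\colon G\to G$ be the power map $\mu_c(x)=x^c$. Then for any integers $a,b$, $\mathrm{D}(\mu_a,\mu_b)=\mathrm{D}(\mu_{a-b},e)$, where $e$ denotes the constant map $G\to G$ with value $e$.
   Context: For continuous maps $f,g\colon X\to Y$, the homotopic distance $\mathrm{D}(f,g)$ is the least integer $n\geq 0$ such that there is an open cover $\{U_0,\dots,U_n\}$ of $X$ with $f|_{U_j}\simeq g|_{U_j}$ for all $j$; if no such cover exists, $\mathrm{D}(f,g)=\infty$. *)

theory Defs
  imports "HOL-Analysis.Analysis" "HOL-Algebra.Group" "HOL-Library.Extended_Nat"
begin

definition topological_group :: "('a, 'b) monoid_scheme \<Rightarrow> 'a topology \<Rightarrow> bool" where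
  "topological_group G X \<longleftrightarrow>
     group G \<and> carrier G = topspace X \<and>
     continuous_map (prod_topology X X) X (\<lambda>(x, y). x \<otimes>\<^bsub>G\<^esub> y) \<and>
     continuous_map X X (\<lambda>x. inv\<^bsub>G\<^esub> x)"

text \<open>Homotopic distance D(f,g): least n such that X is covered by open sets
U_0,...,U_n with f restricted to U_j homotopic to g restricted to U_j;
infinity (Inf of the empty set in enat) if no such cover exists.\<close>
definition homotopic_distance ::
  "'a topology \<Rightarrow> 'b topology \<Rightarrow> ('a \<Rightarrow> 'b) \<Rightarrow> ('a \<Rightarrow> 'b) \<Rightarrow> enat" where
  "homotopic_distance X Y f g =
     Inf {enat n | n. \<exists>U :: nat \<Rightarrow> 'a set.
            (\<forall>j\<le>n. openin X (U j)) \<and> (\<Union>j\<le>n. U j) = topspace X \<and>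
            (\<forall>j\<le>n. homotopic_with (\<lambda>h. True) (subtopology X (U j)) Y f g)}"

end

theory Submission
  imports Defs
begin

text \<open>In a topological group, multiplying two maps on the right by the same continuous map
preserves homotopy, and this is undone by multiplying with its pointwise inverse. Taking
the map \<open>x \<mapsto> x\<^sup>-\<^sup>b\<close> shows that on every open set \<open>U\<close> the maps \<open>\<mu>\<^sub>a\<close> and \<open>\<mu>\<^sub>b\<close> are homotopic iff
\<open>\<mu>\<^sub>a\<^sub>-\<^sub>b\<close> and the constant map \<open>e\<close> are, so both distances are infima over the same covers.\<close>

lemma homotopic_with_cong_topspace:
  assumes "\<And>x. x \<in> topspace Z \<Longrightarrow> f x = f' x" "\<And>x. x \<in> topspace Z \<Longrightarrow> g x = g' x"
  shows "homotopic_with (\<lambda>h. True) Z Y f g \<longleftrightarrow> homotopic_with (\<lambda>h. True) Z Y f' g'"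
proof
  assume "homotopic_with (\<lambda>h. True) Z Y f g"
  then show "homotopic_with (\<lambda>h. True) Z Y f' g'"
    by (rule homotopic_with_eq) (simp_all add: assms)
next
  assume "homotopic_with (\<lambda>h. True) Z Y f' g'"
  then show "homotopic_with (\<lambda>h. True) Z Y f g"
    by (rule homotopic_with_eq) (simp_all add: assms)
qed

lemma continuous_map_group_mult:
  assumes "topological_group G X" "continuous_map Z X f" "continuous_map Z X g"
  shows "continuous_map Z X (\<lambda>x. f x \<otimes>\<^bsub>G\<^esub> g x)"
proof -
  have "continuous_map Z X ((\<lambda>(x, y). x \<otimes>\<^bsub>G\<^esub> y) \<circ> (\<lambda>x. (f x, g x)))"
    using assms unfolding topological_group_def
    by (intro continuous_map_compose[OF continuous_map_pairedI]) auto
  then show ?thesis by (simp add: o_def)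
qed

lemma continuous_map_group_inv:
  assumes "topological_group G X" "continuous_map Z X f"
  shows "continuous_map Z X (\<lambda>x. inv\<^bsub>G\<^esub> f x)"
proof -
  have "continuous_map X X (\<lambda>x. inv\<^bsub>G\<^esub> x)"
    using assms(1) unfolding topological_group_def by blast
  from continuous_map_compose[OF assms(2) this] show ?thesis by (simp add: o_def)
qed

lemma continuous_map_group_nat_pow:
  assumes "topological_group G X"
  shows "continuous_map X X (\<lambda>x. x [^]\<^bsub>G\<^esub> (n::nat))"
proof (induction n)
  case 0
  have "\<one>\<^bsub>G\<^esub> \<in> topspace X"
    using assms unfolding topological_group_def by (metis group.is_monoid monoid.one_closed)
  then show ?case by simp
next
  case (Suc n)
  show ?case
    using continuous_map_group_mult[OF assms Suc continuous_map_id[unfolded id_def]] by simp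
qed

lemma continuous_map_group_int_pow:
  assumes "topological_group G X"
  shows "continuous_map X X (\<lambda>x. x [^]\<^bsub>G\<^esub> (i::int))"
  unfolding int_pow_def2
  by (intro continuous_map_if continuous_map_group_inv[OF assms]
      continuous_map_group_nat_pow[OF assms])

lemma homotopic_with_group_mult_right:
  assumes "topological_group G X" "homotopic_with (\<lambda>h. True) Z X f g" "continuous_map Z X k"
  shows "homotopic_with (\<lambda>h. True) Z X (\<lambda>x. f x \<otimes>\<^bsub>G\<^esub> k x) (\<lambda>x. g x \<otimes>\<^bsub>G\<^esub> k x)"
proof -
  obtain h where h: "continuous_map (prod_topology (top_of_set {0..1::real}) Z) X h"
    "\<forall>x. h (0, x) = f x" "\<forall>x. h (1, x) = g x"
    using assms(2) unfolding homotopic_with_def by blast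
  have "continuous_map (prod_topology (top_of_set {0..1::real}) Z) X (k \<circ> snd)"
    using assms(3) by (simp add: continuous_map_of_snd)
  then have "continuous_map (prod_topology (top_of_set {0..1::real}) Z) X
      (\<lambda>p. h p \<otimes>\<^bsub>G\<^esub> k (snd p))"
    using continuous_map_group_mult[OF assms(1) h(1)] by (simp add: o_def)
  then show ?thesis
    unfolding homotopic_with_def using h by (intro exI[of _ "\<lambda>p. h p \<otimes>\<^bsub>G\<^esub> k (snd p)"]) auto
qed

lemma homotopic_with_group_mult_right_iff:
  assumes tg: "topological_group G X"
    and f: "continuous_map Z X f" and g: "continuous_map Z X g" and k: "continuous_map Z X k"
  shows "homotopic_with (\<lambda>h. True) Z X (\<lambda>x. f x \<otimes>\<^bsub>G\<^esub> k x) (\<lambda>x. g x \<otimes>\<^bsub>G\<^esub> k x)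
     \<longleftrightarrow> homotopic_with (\<lambda>h. True) Z X f g"
proof
  assume "homotopic_with (\<lambda>h. True) Z X (\<lambda>x. f x \<otimes>\<^bsub>G\<^esub> k x) (\<lambda>x. g x \<otimes>\<^bsub>G\<^esub> k x)"
  from homotopic_with_group_mult_right[OF tg this continuous_map_group_inv[OF tg k]]
  show "homotopic_with (\<lambda>h. True) Z X f g"
  proof (rule homotopic_with_eq)
    have grp: "group G" and car: "carrier G = topspace X"
      using tg unfolding topological_group_def by auto
    fix x assume "x \<in> topspace Z"
    then have "f x \<in> carrier G" "g x \<in> carrier G" "k x \<in> carrier G"
      using f g k car by (auto simp: continuous_map_def)
    then show "f x = f x \<otimes>\<^bsub>G\<^esub> k x \<otimes>\<^bsub>G\<^esub> inv\<^bsub>G\<^esub> k x"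
      and "g x = g x \<otimes>\<^bsub>G\<^esub> k x \<otimes>\<^bsub>G\<^esub> inv\<^bsub>G\<^esub> k x"
      by (simp_all add: monoid.m_assoc[OF group.is_monoid[OF grp]] group.r_inv[OF grp]
          group.inv_closed[OF grp] monoid.r_one[OF group.is_monoid[OF grp]])
  qed simp
qed (rule homotopic_with_group_mult_right[OF tg _ k])

lemma homotopic_with_group_int_pow_iff:
  fixes a b :: int
  assumes tg: "topological_group G X"
  shows "homotopic_with (\<lambda>h. True) (subtopology X U) X (\<lambda>x. x [^]\<^bsub>G\<^esub> a) (\<lambda>x. x [^]\<^bsub>G\<^esub> b)
     \<longleftrightarrow> homotopic_with (\<lambda>h. True) (subtopology X U) X
           (\<lambda>x. x [^]\<^bsub>G\<^esub> (a - b)) (\<lambda>x. \<one>\<^bsub>G\<^esub>)"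
proof -
  have grp: "group G" and car: "carrier G = topspace X"
    using tg unfolding topological_group_def by auto
  have pow: "continuous_map (subtopology X U) X (\<lambda>x. x [^]\<^bsub>G\<^esub> (i::int))" for i
    using continuous_map_group_int_pow[OF tg] continuous_map_from_subtopology by blast
  have "homotopic_with (\<lambda>h. True) (subtopology X U) X (\<lambda>x. x [^]\<^bsub>G\<^esub> a) (\<lambda>x. x [^]\<^bsub>G\<^esub> b)
     \<longleftrightarrow> homotopic_with (\<lambda>h. True) (subtopology X U) X
           (\<lambda>x. x [^]\<^bsub>G\<^esub> a \<otimes>\<^bsub>G\<^esub> x [^]\<^bsub>G\<^esub> (-b)) (\<lambda>x. x [^]\<^bsub>G\<^esub> b \<otimes>\<^bsub>G\<^esub> x [^]\<^bsub>G\<^esub> (-b))"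
    using homotopic_with_group_mult_right_iff[OF tg pow pow pow] by simp
  also have "\<dots> \<longleftrightarrow> homotopic_with (\<lambda>h. True) (subtopology X U) X
           (\<lambda>x. x [^]\<^bsub>G\<^esub> (a - b)) (\<lambda>x. \<one>\<^bsub>G\<^esub>)"
    using car by (intro homotopic_with_cong_topspace)
      (auto simp: group.int_pow_mult[OF grp, symmetric])
  finally show ?thesis .
qed

lemma homotopic_distance_cong:
  assumes "\<And>U. homotopic_with (\<lambda>h. True) (subtopology X U) Y f g
             \<longleftrightarrow> homotopic_with (\<lambda>h. True) (subtopology X U) Y f' g'"
  shows "homotopic_distance X Y f g = homotopic_distance X Y f' g'"
  unfolding homotopic_distance_def assms ..

theorem proposition4p4:
  fixes G :: "('a, 'b) monoid_scheme" and X :: "'a topology" and a b :: int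
  assumes "topological_group G X"
  shows "homotopic_distance X X (\<lambda>x. x [^]\<^bsub>G\<^esub> a) (\<lambda>x. x [^]\<^bsub>G\<^esub> b)
         = homotopic_distance X X (\<lambda>x. x [^]\<^bsub>G\<^esub> (a - b)) (\<lambda>x. \<one>\<^bsub>G\<^esub>)"
  using homotopic_with_group_int_pow_iff[OF assms] by (rule homotopic_distance_cong)

end
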